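(* Let $a\geq 1$ and $b\geq 1$ be integers and let $x\in\Lambda^{a+b}$ satisfy $T_{a,b}^k(x)\to(0,\ldots,0)$ as $k\to\infty$. Then the series $\sum_{k\geq 0}x_a^{(k)}$ converges and $\sigma(x)=b\sum_{k\geq 0}x_a^{(k)}$.
   Context: For $n\geq 1$ let $\Lambda^n=\{x\in\mathbb{R}^n : 0\leq x_1\leq\cdots\leq x_n\}$. For integers $a,b\geq 1$ the map $T_{a,b}:\Lambda^{a+b}\to\Lambda^{a+b}$ sends $x$ to the vector obtained by arranging $x_1,\ldots,x_a,\,x_{a+1}-x_a,\ldots,x_{a+b}-x_a$ in nondecreasing order. Write $x^{(k)}=T_{a,b}^k(x)$ and $x^{(k)}_i$ for its $i$-th coordinate; $\sigma(x)=x_1+\cdots+x_{a+b}$. *)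

theory Defs
  imports Complex_Main
begin

text \<open>Vectors in R^n are represented as lists of length n; coordinate x_i (1-indexed)
is xs ! (i - 1).\<close>

definition Lambda :: "nat \<Rightarrow> real list set" where
  "Lambda n = {xs. length xs = n \<and> sorted xs \<and> (\<forall>v\<in>set xs. 0 \<le> v)}"

definition T :: "nat \<Rightarrow> nat \<Rightarrow> real list \<Rightarrow> real list" where
  "T a b xs = sort (take a xs @ map (\<lambda>v. v - xs ! (a - 1)) (take b (drop a xs)))"

definition sigma :: "real list \<Rightarrow> real" where
  "sigma xs = sum_list xs"

end

theory Submission
  imports Defs "HOL-Library.Multiset"
begin

text \<open>One application of \<open>T a b\<close> keeps the coordinates but subtracts \<open>x_a\<close> from \<open>b\<close>
  of them, so \<open>\<sigma>(T x) = \<sigma>(x) - b x_a\<close>. Hence \<open>b\<close> times the \<open>k\<close>-th partial sum of the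
  series telescopes to \<open>\<sigma>(x) - \<sigma>(x\<^sup>(\<^sup>k\<^sup>))\<close>, and \<open>\<sigma>(x\<^sup>(\<^sup>k\<^sup>)) \<rightarrow> 0\<close> because every
  coordinate tends to 0.\<close>

lemma sum_list_sort: "sum_list (sort xs) = sum_list (xs :: 'a :: {linorder, comm_monoid_add} list)"
  by (metis mset_sort sum_mset_sum_list)

lemma sum_list_map_minus_const:
  "sum_list (map (\<lambda>v. v - c) ys) = sum_list ys - of_nat (length ys) * (c :: 'a :: ring_1)"
  by (simp add: sum_list_subtractf sum_list_triv)

lemma length_T:
  assumes "length xs = a + b"
  shows "length (T a b xs) = a + b"
  using assms by (simp add: T_def)

lemma sum_list_T:
  assumes "length xs = a + b"
  shows "sum_list (T a b xs) = sum_list xs - real b * xs ! (a - 1)"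
proof -
  have "take b (drop a xs) = drop a xs"
    using assms by simp
  moreover have "sum_list (take a xs) + sum_list (drop a xs) = sum_list xs"
    by (metis append_take_drop_id sum_list_append)
  ultimately show ?thesis
    using assms by (simp add: T_def sum_list_sort sum_list_map_minus_const)
qed

lemma length_funpow_T:
  assumes "length xs = a + b"
  shows "length ((T a b ^^ k) xs) = a + b"
  using assms by (induction k) (simp_all add: length_T)

lemma sum_list_funpow_T:
  assumes "length xs = a + b"
  shows "sum_list ((T a b ^^ k) xs) = sum_list xs - real b * (\<Sum>j<k. ((T a b ^^ j) xs) ! (a - 1))"
  by (induction k) (simp_all add: sum_list_T length_funpow_T assms algebra_simps)

lemma tendsto_sum_list_zero:
  fixes xs :: "nat \<Rightarrow> 'a :: real_normed_vector list"
  assumes "\<And>k. length (xs k) = n"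
    and "\<And>i. i < n \<Longrightarrow> (\<lambda>k. xs k ! i) \<longlonglongrightarrow> 0"
  shows "(\<lambda>k. sum_list (xs k)) \<longlonglongrightarrow> 0"
proof -
  have "(\<lambda>k. \<Sum>i<n. xs k ! i) \<longlonglongrightarrow> (\<Sum>i<n. 0)"
    by (intro tendsto_sum assms(2)) simp
  then show ?thesis
    by (simp add: sum_list_sum_nth assms(1) lessThan_atLeast0)
qed

lemma sums_of_telescoping_decrements:
  fixes s f :: "nat \<Rightarrow> real"
  assumes "\<And>k. s k = s 0 - c * (\<Sum>j<k. f j)" and "c \<noteq> 0" and "s \<longlonglongrightarrow> 0"
  shows "f sums (s 0 / c)"
proof -
  have "(\<lambda>k. (s 0 - s k) / c) \<longlonglongrightarrow> (s 0 - 0) / c"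
    by (intro tendsto_intros assms(2,3))
  moreover have "(\<Sum>j<k. f j) = (s 0 - s k) / c" for k
    using assms(1)[of k] assms(2) by (simp add: field_simps)
  ultimately show ?thesis
    by (simp add: sums_def)
qed

theorem lemma4p3:
  fixes a b :: nat and x :: "real list"
  assumes "a \<ge> 1" and "b \<ge> 1"
    and "x \<in> Lambda (a + b)"
    and "\<forall>i < a + b. (\<lambda>k. ((T a b ^^ k) x) ! i) \<longlonglongrightarrow> 0"
  shows "summable (\<lambda>k. ((T a b ^^ k) x) ! (a - 1))
    \<and> sigma x = real b * (\<Sum>k. ((T a b ^^ k) x) ! (a - 1))"
proof -
  have len: "length x = a + b"
    using assms(3) by (simp add: Lambda_def)
  have "(\<lambda>k. sum_list ((T a b ^^ k) x)) \<longlonglongrightarrow> 0"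
    using assms(4) by (intro tendsto_sum_list_zero[where n = "a + b"]) (auto simp: length_funpow_T len)
  then have "(\<lambda>k. ((T a b ^^ k) x) ! (a - 1)) sums (sum_list x / real b)"
    using sums_of_telescoping_decrements[where s = "\<lambda>k. sum_list ((T a b ^^ k) x)"]
      sum_list_funpow_T[OF len] assms(2) by simp
  then show ?thesis
    using assms(2) by (simp add: sums_iff sigma_def)
qed

end
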